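(* Let $G$ be a connected graph with a pair of vertices of order $h$ and a marking $S$. Let $v,v'$ be two vertices of $G$ joined by exactly $e\geq 1$ edges, with weights $s$ and $s'$ where $s>s'$, and normalize the marking (by adding a constant vector) so that $s'=0$. Let $G'$ be the graph obtained from $G$ by thickening the edges between $v$ and $v'$. Then the number of spanning trees satisfies $|\Phi(G')|=s\,(es)^{s-1}\,|\Phi(G)|$.
   Context: Graphs are finite, connected, may have multiple edges, no loops. With $c_{ij}$ ($i\neq j$) the number of edges joining $v_i,v_j$, $c_{ii}=-\sum_{j\ne i}c_{ij}$ and $M(G)=(c_{ij})$, $\mathbb{Z}^n/\mathrm{Im}(M(G))\cong \mathbb{Z}\times\Phi(G)$ with $\Phi(G)$ finite, and $|\Phi(G)|$ equals the number of spanning trees of $G$. A pair $\{v_i,v_j\}$ has order $h>0$ if there is $S=(s_1,\dots,s_n)^t\in\mathbb{Z}^n$ with $M(G)S=h(e_i-e_j)$ and $\gcd(s_1-s_n,\dots,s_{n-1}-s_n)=1$; $S$ is a marking, $s_k$ the weight of $v_k$, and $S+\alpha(1,\dots,1)^t$ is also a marking. Thickening the $e$ edges between $v'$ (weight $s'$) and $v$ (weight $s>s'$): delete these edges, add new vertices $w_1,\dots,w_{s-s'-1}$, and with $w_0=v'$, $w_{s-s'}=v$, join $w_{k-1}$ and $w_k$ by $e(s-s')$ edges for $k=1,\dots,s-s'$. *)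

theory Defs
  imports Main
begin

text \<open>A finite multigraph on vertex set {0..<n} is given by its edge-multiplicity
  function c: c i j = number of edges joining vertices i and j.\<close>

definition multigraph :: "nat \<Rightarrow> (nat \<Rightarrow> nat \<Rightarrow> nat) \<Rightarrow> bool" where
  "multigraph n c \<longleftrightarrow> (\<forall>i j. c i j = c j i) \<and> (\<forall>i. c i i = 0)
     \<and> (\<forall>i j. (n \<le> i \<or> n \<le> j) \<longrightarrow> c i j = 0)"

definition connected_mg :: "nat \<Rightarrow> (nat \<Rightarrow> nat \<Rightarrow> nat) \<Rightarrow> bool" where
  "connected_mg n c \<longleftrightarrow> 0 < n \<and>
     (\<forall>i<n. \<forall>j<n. (i, j) \<in> {(a, b). a < n \<and> b < n \<and> 0 < c a b}\<^sup>*)"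

definition lap :: "nat \<Rightarrow> (nat \<Rightarrow> nat \<Rightarrow> nat) \<Rightarrow> nat \<Rightarrow> nat \<Rightarrow> int" where
  "lap n c i j = (if i = j then - (\<Sum>k\<in>{0..<n} - {i}. int (c i k)) else int (c i j))"

definition lap_apply :: "nat \<Rightarrow> (nat \<Rightarrow> nat \<Rightarrow> nat) \<Rightarrow> (nat \<Rightarrow> int) \<Rightarrow> nat \<Rightarrow> int" where
  "lap_apply n c S i = (\<Sum>j<n. lap n c i j * S j)"

text \<open>S is a marking for the pair {p,q} of order h:
  M(G) S = h (e_p - e_q) and gcd(s_1 - s_n, ..., s_{n-1} - s_n) = 1
  (0-based indices: vertices 0..n-1, the last one is n-1).\<close>

definition is_marking :: "nat \<Rightarrow> (nat \<Rightarrow> nat \<Rightarrow> nat) \<Rightarrow> nat \<Rightarrow> nat \<Rightarrow> int \<Rightarrow> (nat \<Rightarrow> int) \<Rightarrow> bool" where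
  "is_marking n c p q h S \<longleftrightarrow>
     (\<forall>k<n. lap_apply n c S k = h * ((if k = p then 1 else 0) - (if k = q then 1 else 0)))
     \<and> Gcd ((\<lambda>k. S k - S (n - 1)) ` {..<n - 1}) = 1"

definition pair_of_order :: "nat \<Rightarrow> (nat \<Rightarrow> nat \<Rightarrow> nat) \<Rightarrow> nat \<Rightarrow> nat \<Rightarrow> int \<Rightarrow> bool" where
  "pair_of_order n c p q h \<longleftrightarrow> p < n \<and> q < n \<and> p \<noteq> q \<and> 0 < h \<and>
     (\<exists>S. is_marking n c p q h S)"

text \<open>Number of spanning trees of a multigraph: sum over spanning trees T of the
  complete graph on {0..<n} of the product of edge multiplicities (a tree using a
  non-edge contributes 0; a tree using an edge of multiplicity m is counted m times,
  once for each choice of the parallel edge).\<close>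

definition edges_on :: "nat \<Rightarrow> nat set set" where
  "edges_on n = {{i, j} | i j. i < n \<and> j < n \<and> i \<noteq> j}"

definition is_spanning_tree :: "nat \<Rightarrow> nat set set \<Rightarrow> bool" where
  "is_spanning_tree n T \<longleftrightarrow> T \<subseteq> edges_on n \<and> card T = n - 1 \<and>
     (\<forall>i<n. \<forall>j<n. (i, j) \<in> {(a, b). {a, b} \<in> T}\<^sup>*)"

definition num_spanning_trees :: "nat \<Rightarrow> (nat \<Rightarrow> nat \<Rightarrow> nat) \<Rightarrow> nat" where
  "num_spanning_trees n c =
     (\<Sum>T\<in>{T. is_spanning_tree n T}. \<Prod>ed\<in>T. c (Min ed) (Max ed))"

text \<open>Thickening the e edges between v' (weight 0) and v (weight s \<ge> 1):
  new vertices w_k = n + k - 1 for k = 1..s-1, w_0 = v', w_s = v;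
  w_{k-1} and w_k are joined by e*s edges. The new graph has n + s - 1 vertices.\<close>

definition thick_vertex :: "nat \<Rightarrow> nat \<Rightarrow> nat \<Rightarrow> nat \<Rightarrow> nat \<Rightarrow> nat" where
  "thick_vertex n v v' s k = (if k = 0 then v' else if k = s then v else n + k - 1)"

definition thicken :: "nat \<Rightarrow> (nat \<Rightarrow> nat \<Rightarrow> nat) \<Rightarrow> nat \<Rightarrow> nat \<Rightarrow> nat \<Rightarrow> nat
    \<Rightarrow> (nat \<Rightarrow> nat \<Rightarrow> nat)" where
  "thicken n c v v' e s = (\<lambda>a b.
     if (\<exists>k\<in>{1..s}. {a, b} = {thick_vertex n v v' s (k - 1), thick_vertex n v v' s k})
     then e * s
     else if {a, b} = {v, v'} then 0
     else c a b)"

end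

theory Submission
  imports Defs
begin

text \<open>
  For an edge d of a weighted graph, the weighted count of spanning trees splits as A + w(d) B,
  where A sums over the trees avoiding d and B over the trees through d (with d itself removed).
  Subdividing an edge {u, z} by a new vertex x, with weight \<alpha> on {u, x}, gives A' = \<alpha> A and
  B' = A + \<alpha> B with respect to {x, z}: a tree of nonzero weight either hangs x as a leaf on u or
  on z, or runs through u - x - z. Growing the path between v' and v one edge of weight b at a
  time then gives, for a path of s edges, A_s = b^(s-1) A and B_s = b^(s-1) B + (s-1) b^(s-2) A,
  hence A_s + b B_s = s b^(s-1) A + b^s B. With b = e s this is s (e s)^(s-1) (A + e B).
\<close>

definition edges_in :: "'a set \<Rightarrow> 'a set set" where
  "edges_in V = {{i, j} | i j. i \<in> V \<and> j \<in> V \<and> i \<noteq> j}"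

definition adjacency :: "'a set set \<Rightarrow> ('a \<times> 'a) set" where
  "adjacency T = {(a, b). {a, b} \<in> T}"

definition connects :: "'a set set \<Rightarrow> 'a set \<Rightarrow> bool" where
  "connects T V \<longleftrightarrow> (\<forall>i\<in>V. \<forall>j\<in>V. (i, j) \<in> (adjacency T)\<^sup>*)"

definition spanning_trees :: "'a set \<Rightarrow> 'a set set set" where
  "spanning_trees V = {T. T \<subseteq> edges_in V \<and> card T = card V - 1 \<and> connects T V}"

lemma edges_inI: "a \<in> V \<Longrightarrow> b \<in> V \<Longrightarrow> a \<noteq> b \<Longrightarrow> {a, b} \<in> edges_in V"
  by (auto simp: edges_in_def)

lemma doubleton_in_edges_in: "{a, b} \<in> edges_in V \<longleftrightarrow> a \<in> V \<and> b \<in> V \<and> a \<noteq> b"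
  by (auto simp: edges_in_def doubleton_eq_iff)

lemma edges_in_mono: "V \<subseteq> W \<Longrightarrow> edges_in V \<subseteq> edges_in W"
  by (auto simp: edges_in_def)

lemma finite_edge_set: "finite V \<Longrightarrow> T \<subseteq> edges_in V \<Longrightarrow> finite T"
  by (rule finite_subset[of _ "Pow V"]) (auto simp: edges_in_def)

lemma finite_spanning_trees: "finite V \<Longrightarrow> finite (spanning_trees V)"
  by (rule finite_subset[of _ "Pow (edges_in V)"]) (auto simp: spanning_trees_def finite_edge_set)

lemma finite_spanning_tree: "finite V \<Longrightarrow> T \<in> spanning_trees V \<Longrightarrow> finite T"
  by (simp add: spanning_trees_def finite_edge_set)

lemma connects_image:
  assumes "connects T V" and "\<And>a b. {a, b} \<in> T \<Longrightarrow> (f a, f b) \<in> (adjacency T')\<^sup>*"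
  shows "connects T' (f ` V)"
proof -
  have "(f i, f j) \<in> (adjacency T')\<^sup>*" if "(i, j) \<in> (adjacency T)\<^sup>*" for i j
    using that
  proof (induction rule: rtrancl_induct)
    case (step j k)
    then show ?case
      using assms(2)[of j k] by (simp add: adjacency_def)
  qed simp
  then show ?thesis
    using assms(1) by (auto simp: connects_def)
qed

lemma connects_insert_vertex:
  assumes "connects T V" and "y \<in> V" and "{x, y} \<in> T"
  shows "connects T (insert x V)"
proof -
  have "(x, y) \<in> (adjacency T)\<^sup>*" "(y, x) \<in> (adjacency T)\<^sup>*"
    using assms(3) by (auto simp: adjacency_def insert_commute)
  then show ?thesis
    using assms(1,2) unfolding connects_def by (blast intro: rtrancl_trans)
qed

lemma reachable_from_outside:
  assumes "T \<subseteq> edges_in V" and "x \<notin> V" and "(x, y) \<in> (adjacency T)\<^sup>*"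
  shows "y = x"
  using assms(3)
proof (cases rule: converse_rtranclE)
  case (step b)
  then show ?thesis
    using assms(1,2) by (auto simp: adjacency_def doubleton_in_edges_in dest!: subsetD)
qed simp

lemma connects_insert_leaf:
  assumes "x \<notin> V" and "y \<in> V" and "T \<subseteq> edges_in V"
  shows "connects (insert {x, y} T) (insert x V) \<longleftrightarrow> connects T V"
proof
  assume "connects (insert {x, y} T) (insert x V)"
  then have "connects T ((\<lambda>a. if a = x then y else a) ` insert x V)"
    by (rule connects_image)
      (use assms in \<open>auto simp: doubleton_eq_iff adjacency_def doubleton_in_edges_in dest!: subsetD\<close>)
  moreover have "(\<lambda>a. if a = x then y else a) ` insert x V = V"
    using assms(1,2) by auto
  ultimately show "connects T V"
    by simp
next
  assume "connects T V"
  then have "connects (insert {x, y} T) (id ` V)"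
    by (rule connects_image) (auto simp: adjacency_def)
  then show "connects (insert {x, y} T) (insert x V)"
    using assms(2) by (intro connects_insert_vertex) auto
qed

lemma connects_insert_path:
  assumes "x \<notin> V" and "u \<in> V" and "z \<in> V" and "T \<subseteq> edges_in V"
  shows "connects (insert {u, x} (insert {x, z} T)) (insert x V) \<longleftrightarrow> connects (insert {u, z} T) V"
proof
  assume "connects (insert {u, x} (insert {x, z} T)) (insert x V)"
  then have "connects (insert {u, z} T) ((\<lambda>a. if a = x then u else a) ` insert x V)"
    by (rule connects_image)
      (use assms in \<open>auto simp: doubleton_eq_iff adjacency_def doubleton_in_edges_in dest!: subsetD\<close>)
  moreover have "(\<lambda>a. if a = x then u else a) ` insert x V = V"
    using assms(1,2) by auto
  ultimately show "connects (insert {u, z} T) V"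
    by simp
next
  let ?T' = "insert {u, x} (insert {x, z} T)"
  assume "connects (insert {u, z} T) V"
  moreover have "(a, b) \<in> (adjacency ?T')\<^sup>*" if "{a, b} \<in> insert {u, z} T" for a b
  proof -
    have "(u, x) \<in> adjacency ?T'" "(x, z) \<in> adjacency ?T'"
      "(z, x) \<in> adjacency ?T'" "(x, u) \<in> adjacency ?T'"
      by (auto simp: adjacency_def insert_commute)
    then show ?thesis
      using that by (auto simp: doubleton_eq_iff adjacency_def intro: rtrancl_into_rtrancl)
  qed
  ultimately have "connects ?T' (id ` V)"
    by (intro connects_image) auto
  then show "connects ?T' (insert x V)"
    using assms(2) by (intro connects_insert_vertex[of _ _ u]) (auto simp: insert_commute)
qed

lemma edge_notin_edges_in: "T \<subseteq> edges_in V \<Longrightarrow> x \<notin> V \<Longrightarrow> {x, y} \<notin> T"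
  by (auto simp: doubleton_in_edges_in)

lemma spanning_trees_insert_leaf:
  assumes "finite V" and "x \<notin> V" and "y \<in> V" and "T \<subseteq> edges_in V"
  shows "insert {x, y} T \<in> spanning_trees (insert x V) \<longleftrightarrow> T \<in> spanning_trees V"
proof -
  have "finite T"
    using assms(1,4) by (rule finite_edge_set)
  moreover have "{x, y} \<notin> T"
    using edge_notin_edges_in[OF assms(4,2)] .
  moreover have "0 < card V"
    using assms(1,3) card_gt_0_iff by blast
  moreover have "insert {x, y} T \<subseteq> edges_in (insert x V)"
    using assms edges_in_mono[of V "insert x V"] by (auto intro: edges_inI)
  ultimately show ?thesis
    using assms by (auto simp: spanning_trees_def connects_insert_leaf)
qed

lemma spanning_trees_insert_path:
  assumes "finite V" and "x \<notin> V" and "u \<in> V" and "z \<in> V" and "u \<noteq> z"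
    and "T \<subseteq> edges_in V" and "{u, z} \<notin> T"
  shows "insert {u, x} (insert {x, z} T) \<in> spanning_trees (insert x V)
    \<longleftrightarrow> insert {u, z} T \<in> spanning_trees V"
proof -
  have "finite T"
    using assms(1,6) by (rule finite_edge_set)
  moreover have "{x, z} \<notin> T" "{u, x} \<notin> insert {x, z} T"
    using assms edge_notin_edges_in[OF assms(6,2), of z] edge_notin_edges_in[OF assms(6,2), of u]
    by (auto simp: doubleton_eq_iff insert_commute)
  moreover have "card V \<ge> 2"
    using assms card_mono[of V "{u, z}"] by auto
  moreover have "insert {u, x} (insert {x, z} T) \<subseteq> edges_in (insert x V)"
    "insert {u, z} T \<subseteq> edges_in V"
    using assms edges_in_mono[of V "insert x V"] by (auto intro: edges_inI)
  ultimately show ?thesis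
    using assms by (auto simp: spanning_trees_def connects_insert_path)
qed

definition tree_sum :: "'a set \<Rightarrow> ('a set \<Rightarrow> 'w::comm_semiring_1) \<Rightarrow> 'w" where
  "tree_sum V w = (\<Sum>T\<in>spanning_trees V. prod w T)"

definition tree_sum_avoiding :: "'a set \<Rightarrow> ('a set \<Rightarrow> 'w::comm_semiring_1) \<Rightarrow> 'a set \<Rightarrow> 'w" where
  "tree_sum_avoiding V w d = (\<Sum>T | T \<in> spanning_trees V \<and> d \<notin> T. prod w T)"

definition tree_sum_through :: "'a set \<Rightarrow> ('a set \<Rightarrow> 'w::comm_semiring_1) \<Rightarrow> 'a set \<Rightarrow> 'w" where
  "tree_sum_through V w d = (\<Sum>T | T \<in> spanning_trees V \<and> d \<in> T. prod w (T - {d}))"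

lemma sum_split_filter: "finite A \<Longrightarrow> sum f A = sum f {x \<in> A. P x} + sum f {x \<in> A. \<not> P x}"
  using sum.Int_Diff[of A f "{x. P x}"] by (simp add: Int_def set_diff_eq)

lemma tree_sum_split:
  assumes "finite V"
  shows "tree_sum V w = tree_sum_avoiding V w d + w d * tree_sum_through V w d"
proof -
  have "tree_sum V w = (\<Sum>T | T \<in> spanning_trees V \<and> d \<in> T. prod w T) + tree_sum_avoiding V w d"
    using sum_split_filter[OF finite_spanning_trees[OF assms], of "prod w" "\<lambda>T. d \<in> T"]
    by (simp add: tree_sum_def tree_sum_avoiding_def)
  also have "(\<Sum>T | T \<in> spanning_trees V \<and> d \<in> T. prod w T) = w d * tree_sum_through V w d"
    unfolding tree_sum_through_def sum_distrib_left
    by (rule sum.cong) (auto intro: prod.remove finite_spanning_tree[OF assms])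
  finally show ?thesis
    by (simp add: add.commute)
qed

lemma tree_sum_cong:
  "(\<And>d. d \<in> edges_in V \<Longrightarrow> w d = w' d) \<Longrightarrow> tree_sum V w = tree_sum V w'"
  unfolding tree_sum_def by (auto intro!: sum.cong prod.cong simp: spanning_trees_def)

lemma tree_sum_avoiding_cong:
  "(\<And>d'. d' \<in> edges_in V \<Longrightarrow> d' \<noteq> d \<Longrightarrow> w d' = w' d')
    \<Longrightarrow> tree_sum_avoiding V w d = tree_sum_avoiding V w' d"
  unfolding tree_sum_avoiding_def by (auto intro!: sum.cong prod.cong simp: spanning_trees_def)

lemma tree_sum_through_cong:
  "(\<And>d'. d' \<in> edges_in V \<Longrightarrow> d' \<noteq> d \<Longrightarrow> w d' = w' d')
    \<Longrightarrow> tree_sum_through V w d = tree_sum_through V w' d"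
  unfolding tree_sum_through_def by (auto intro!: sum.cong prod.cong simp: spanning_trees_def)

lemma sum_over_injective_image:
  assumes "finite S" and "inj_on g A" and "g ` A \<subseteq> S"
    and "\<And>y. y \<in> S \<Longrightarrow> f y \<noteq> 0 \<Longrightarrow> y \<in> g ` A"
  shows "sum f S = (\<Sum>x\<in>A. f (g x))"
proof -
  have "sum f S = sum f (g ` A)"
    using assms by (intro sum.mono_neutral_right) auto
  also have "\<dots> = (\<Sum>x\<in>A. f (g x))"
    using sum.reindex[OF assms(2)] by simp
  finally show ?thesis .
qed

text \<open>
  The weights w' live on the graph in which the edge {u, z} of (V, w) is subdivided by x. The weight
  of {x, z} is left free, since it does not enter the sums taken with respect to {x, z}.
\<close>

locale edge_subdivision =
  fixes V :: "'a set" and x u z :: 'a and w w' :: "'a set \<Rightarrow> 'w::comm_semiring_1" and \<alpha> :: 'w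
  assumes finite_V: "finite V" and u_in: "u \<in> V" and z_in: "z \<in> V" and u_ne_z: "u \<noteq> z"
    and x_notin: "x \<notin> V"
    and weight_old: "\<And>d. d \<in> edges_in V \<Longrightarrow> d \<noteq> {u, z} \<Longrightarrow> w' d = w d"
    and weight_uz: "w' {u, z} = 0"
    and weight_ux: "w' {u, x} = \<alpha>"
    and weight_x_other: "\<And>y. y \<noteq> u \<Longrightarrow> y \<noteq> z \<Longrightarrow> w' {x, y} = 0"
begin

lemma prod_weight_old: "T \<subseteq> edges_in V \<Longrightarrow> {u, z} \<notin> T \<Longrightarrow> prod w' T = prod w T"
  using weight_old by (auto intro!: prod.cong)

lemma new_edges_notin: "T \<subseteq> edges_in V \<Longrightarrow> {u, x} \<notin> T \<and> {x, z} \<notin> T"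
  using edge_notin_edges_in[OF _ x_notin] by (metis insert_commute)

lemma flip_edge: "{x, u} = {u, x}"
  by (rule insert_commute)

lemma new_edges_distinct: "{x, z} \<noteq> {u, x}" "{u, z} \<noteq> {x, z}"
  using u_ne_z u_in x_notin by (auto simp: doubleton_eq_iff)

lemma nonvanishing_tree_shape:
  assumes T': "T' \<in> spanning_trees (insert x V)" and nz: "prod w' (T' - {{x, z}}) \<noteq> 0"
  shows "T' - {{u, x}, {x, z}} \<subseteq> edges_in V" and "{u, z} \<notin> T'"
    and "{u, x} \<in> T' \<or> {x, z} \<in> T'"
proof -
  have "finite T'"
    using finite_spanning_tree[OF _ T'] finite_V by simp
  have weight_nz: "w' d \<noteq> 0" if "d \<in> T'" "d \<noteq> {x, z}" for d
  proof
    assume "w' d = 0"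
    then have "prod w' (T' - {{x, z}}) = 0"
      using that \<open>finite T'\<close> by (intro prod_zero) auto
    with nz show False
      by simp
  qed
  show old: "T' - {{u, x}, {x, z}} \<subseteq> edges_in V"
  proof
    fix d assume d: "d \<in> T' - {{u, x}, {x, z}}"
    then have "d \<in> edges_in (insert x V)"
      using T' by (auto simp: spanning_trees_def)
    then obtain a b where ab: "d = {a, b}" "a \<in> insert x V" "b \<in> insert x V" "a \<noteq> b"
      unfolding edges_in_def by blast
    have "w' d \<noteq> 0"
      using weight_nz d by blast
    moreover have "w' {x, y} = 0" if "d = {x, y}" for y
      using that d by (intro weight_x_other) (auto simp: doubleton_eq_iff)
    ultimately have "a \<noteq> x" "b \<noteq> x"
      using ab(1) by (metis insert_commute)+
    then show "d \<in> edges_in V"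
      using ab by (auto intro: edges_inI)
  qed
  show "{u, z} \<notin> T'"
  proof
    assume "{u, z} \<in> T'"
    then show False
      using weight_nz new_edges_distinct(2) weight_uz by blast
  qed
  show "{u, x} \<in> T' \<or> {x, z} \<in> T'"
  proof (rule ccontr)
    assume "\<not> ?thesis"
    then have "T' \<subseteq> edges_in V"
      using old by blast
    moreover have "(x, u) \<in> (adjacency T')\<^sup>*"
      using T' u_in by (auto simp: spanning_trees_def connects_def)
    ultimately show False
      using reachable_from_outside[of T' V x u] x_notin u_in by blast
  qed
qed

lemma nonvanishing_tree_avoiding:
  assumes "T' \<in> spanning_trees (insert x V)" and "{x, z} \<notin> T'" and "prod w' T' \<noteq> 0"
  shows "T' \<in> insert {u, x} ` {T \<in> spanning_trees V. {u, z} \<notin> T}"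
proof -
  define T where "T = T' - {{u, x}}"
  have "T \<subseteq> edges_in V" "{u, z} \<notin> T" "T' = insert {u, x} T"
    using nonvanishing_tree_shape[of T'] assms by (auto simp: T_def)
  moreover from this have "T \<in> spanning_trees V"
    using spanning_trees_insert_leaf[OF finite_V x_notin u_in] assms(1)
    unfolding flip_edge by simp
  ultimately show ?thesis
    by blast
qed

lemma nonvanishing_tree_through_leaf:
  assumes "T' \<in> spanning_trees (insert x V)" and "{x, z} \<in> T'" and "{u, x} \<notin> T'"
    and "prod w' (T' - {{x, z}}) \<noteq> 0"
  shows "T' \<in> insert {x, z} ` {T \<in> spanning_trees V. {u, z} \<notin> T}"
proof -
  define T where "T = T' - {{x, z}}"
  have "T \<subseteq> edges_in V" "{u, z} \<notin> T" "T' = insert {x, z} T"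
    using nonvanishing_tree_shape[of T'] assms by (auto simp: T_def)
  moreover from this have "T \<in> spanning_trees V"
    using spanning_trees_insert_leaf[OF finite_V x_notin z_in] assms(1) by simp
  ultimately show ?thesis
    by blast
qed

lemma nonvanishing_tree_through_path:
  assumes "T' \<in> spanning_trees (insert x V)" and "{x, z} \<in> T'" and "{u, x} \<in> T'"
    and "prod w' (T' - {{x, z}}) \<noteq> 0"
  shows "T' \<in> (\<lambda>T. insert {u, x} (insert {x, z} (T - {{u, z}}))) ` {T \<in> spanning_trees V. {u, z} \<in> T}"
proof -
  define T0 where "T0 = T' - {{u, x}, {x, z}}"
  have T0: "T0 \<subseteq> edges_in V" "{u, z} \<notin> T0" "T' = insert {u, x} (insert {x, z} T0)"
    using nonvanishing_tree_shape[of T'] assms by (auto simp: T0_def)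
  then have "insert {u, z} T0 \<in> spanning_trees V"
    using spanning_trees_insert_path[OF finite_V x_notin u_in z_in u_ne_z] assms(1) by simp
  moreover have "T' = insert {u, x} (insert {x, z} (insert {u, z} T0 - {{u, z}}))"
    using T0 by simp
  ultimately show ?thesis
    by blast
qed

lemma tree_sum_avoiding_subdivision:
  "tree_sum_avoiding (insert x V) w' {x, z} = \<alpha> * tree_sum_avoiding V w {u, z}"
proof -
  let ?A = "{T \<in> spanning_trees V. {u, z} \<notin> T}"
  let ?A' = "{T'. T' \<in> spanning_trees (insert x V) \<and> {x, z} \<notin> T'}"
  have "(\<Sum>T'\<in>?A'. prod w' T') = (\<Sum>T\<in>?A. prod w' (insert {u, x} T))"
  proof (rule sum_over_injective_image)
    show "finite ?A'"
      using finite_spanning_trees[of "insert x V"] finite_V by simp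
    have "insert {u, x} T - {{u, x}} = T" if "T \<in> ?A" for T
      using that new_edges_notin[of T] by (auto simp: spanning_trees_def)
    then show "inj_on (insert {u, x}) ?A"
      by (rule inj_on_inverseI)
    show "insert {u, x} ` ?A \<subseteq> ?A'"
    proof
      fix T' assume "T' \<in> insert {u, x} ` ?A"
      then obtain T where T: "T \<in> spanning_trees V" "T' = insert {u, x} T"
        by blast
      then have "T \<subseteq> edges_in V"
        by (simp add: spanning_trees_def)
      then show "T' \<in> ?A'"
        using T spanning_trees_insert_leaf[OF finite_V x_notin u_in \<open>T \<subseteq> _\<close>] new_edges_notin[of T]
          new_edges_distinct unfolding flip_edge by simp
    qed
  qed (use nonvanishing_tree_avoiding in auto)
  also have "\<dots> = (\<Sum>T\<in>?A. \<alpha> * prod w T)"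
  proof (rule sum.cong)
    fix T assume T: "T \<in> ?A"
    then have "T \<subseteq> edges_in V" "finite T"
      using finite_spanning_tree[OF finite_V] unfolding spanning_trees_def by blast+
    then show "prod w' (insert {u, x} T) = \<alpha> * prod w T"
      using T new_edges_notin[of T] by (simp add: weight_ux prod_weight_old)
  qed simp
  finally show ?thesis
    by (simp add: tree_sum_avoiding_def sum_distrib_left)
qed

lemma tree_sum_through_leaf_part:
  "(\<Sum>T' | T' \<in> spanning_trees (insert x V) \<and> {x, z} \<in> T' \<and> {u, x} \<notin> T'. prod w' (T' - {{x, z}}))
    = tree_sum_avoiding V w {u, z}"
proof -
  let ?A = "{T \<in> spanning_trees V. {u, z} \<notin> T}"
  let ?B1 = "{T'. T' \<in> spanning_trees (insert x V) \<and> {x, z} \<in> T' \<and> {u, x} \<notin> T'}"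
  have "(\<Sum>T'\<in>?B1. prod w' (T' - {{x, z}})) = (\<Sum>T\<in>?A. prod w' (insert {x, z} T - {{x, z}}))"
  proof (rule sum_over_injective_image)
    show "finite ?B1"
      using finite_spanning_trees[of "insert x V"] finite_V by simp
    have "insert {x, z} T - {{x, z}} = T" if "T \<in> ?A" for T
      using that new_edges_notin[of T] by (auto simp: spanning_trees_def)
    then show "inj_on (insert {x, z}) ?A"
      by (rule inj_on_inverseI)
    show "insert {x, z} ` ?A \<subseteq> ?B1"
    proof
      fix T' assume "T' \<in> insert {x, z} ` ?A"
      then obtain T where T: "T \<in> spanning_trees V" "T' = insert {x, z} T"
        by blast
      then have "T \<subseteq> edges_in V"
        by (simp add: spanning_trees_def)
      then show "T' \<in> ?B1"
        using T spanning_trees_insert_leaf[OF finite_V x_notin z_in \<open>T \<subseteq> _\<close>] new_edges_notin[of T]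
          new_edges_distinct by simp
    qed
  qed (use nonvanishing_tree_through_leaf in auto)
  also have "\<dots> = (\<Sum>T\<in>?A. prod w T)"
  proof (rule sum.cong)
    fix T assume T: "T \<in> ?A"
    then have "T \<subseteq> edges_in V"
      unfolding spanning_trees_def by blast
    then show "prod w' (insert {x, z} T - {{x, z}}) = prod w T"
      using T new_edges_notin[of T] by (simp add: prod_weight_old)
  qed simp
  finally show ?thesis
    by (simp add: tree_sum_avoiding_def)
qed

lemma tree_sum_through_path_part:
  "(\<Sum>T' | T' \<in> spanning_trees (insert x V) \<and> {x, z} \<in> T' \<and> {u, x} \<in> T'. prod w' (T' - {{x, z}}))
    = \<alpha> * tree_sum_through V w {u, z}"
proof -
  let ?B = "{T \<in> spanning_trees V. {u, z} \<in> T}"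
  let ?B2 = "{T'. T' \<in> spanning_trees (insert x V) \<and> {x, z} \<in> T' \<and> {u, x} \<in> T'}"
  let ?g = "\<lambda>T. insert {u, x} (insert {x, z} (T - {{u, z}}))"
  have "(\<Sum>T'\<in>?B2. prod w' (T' - {{x, z}})) = (\<Sum>T\<in>?B. prod w' (?g T - {{x, z}}))"
  proof (rule sum_over_injective_image)
    show "finite ?B2"
      using finite_spanning_trees[of "insert x V"] finite_V by simp
    have "insert {u, z} (?g T - {{u, x}, {x, z}}) = T" if "T \<in> ?B" for T
      using that new_edges_notin[of T] by (auto simp: spanning_trees_def)
    then show "inj_on ?g ?B"
      by (rule inj_on_inverseI)
    show "?g ` ?B \<subseteq> ?B2"
    proof
      fix T' assume "T' \<in> ?g ` ?B"
      then obtain T where T: "T \<in> spanning_trees V" "{u, z} \<in> T" "T' = ?g T"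
        by blast
      then have "T - {{u, z}} \<subseteq> edges_in V" "insert {u, z} (T - {{u, z}}) = T"
        unfolding spanning_trees_def by blast+
      then show "T' \<in> ?B2"
        using T spanning_trees_insert_path[OF finite_V x_notin u_in z_in u_ne_z] by simp
    qed
  qed (use nonvanishing_tree_through_path in auto)
  also have "\<dots> = (\<Sum>T\<in>?B. \<alpha> * prod w (T - {{u, z}}))"
  proof (rule sum.cong)
    fix T assume T: "T \<in> ?B"
    then have "T - {{u, z}} \<subseteq> edges_in V" "finite T"
      using finite_spanning_tree[OF finite_V] unfolding spanning_trees_def by blast+
    moreover have "?g T - {{x, z}} = insert {u, x} (T - {{u, z}})"
      using new_edges_notin[OF \<open>T - {{u, z}} \<subseteq> _\<close>] new_edges_distinct by auto
    ultimately show "prod w' (?g T - {{x, z}}) = \<alpha> * prod w (T - {{u, z}})"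
      using new_edges_notin[of "T - {{u, z}}"] by (simp add: weight_ux prod_weight_old)
  qed simp
  finally show ?thesis
    by (simp add: tree_sum_through_def sum_distrib_left)
qed

lemma tree_sum_through_subdivision:
  "tree_sum_through (insert x V) w' {x, z} = tree_sum_avoiding V w {u, z} + \<alpha> * tree_sum_through V w {u, z}"
proof -
  have "finite {T' \<in> spanning_trees (insert x V). {x, z} \<in> T'}"
    using finite_spanning_trees[of "insert x V"] finite_V by simp
  from sum_split_filter[OF this, where P = "\<lambda>T'. {u, x} \<in> T'" and f = "\<lambda>T'. prod w' (T' - {{x, z}})"]
  show ?thesis
    using tree_sum_through_leaf_part tree_sum_through_path_part
    by (simp add: tree_sum_through_def conj_assoc add.commute)
qed

end

definition edge_weight :: "(nat \<Rightarrow> nat \<Rightarrow> nat) \<Rightarrow> nat set \<Rightarrow> nat" where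
  "edge_weight c d = c (Min d) (Max d)"

definition thick_path_edges :: "nat \<Rightarrow> nat \<Rightarrow> nat \<Rightarrow> nat \<Rightarrow> nat set set" where
  "thick_path_edges n v v' k =
     (\<lambda>i. {thick_vertex n v v' k (i - 1), thick_vertex n v v' k i}) ` {1..k}"

text \<open>
  Unlike thicken, the multiplicity b of the path edges does not depend on the path length k, so
  the path can be grown one edge at a time; thicken is the case b = e s, k = s.
\<close>

definition thick_weight ::
    "nat \<Rightarrow> (nat \<Rightarrow> nat \<Rightarrow> nat) \<Rightarrow> nat \<Rightarrow> nat \<Rightarrow> nat \<Rightarrow> nat \<Rightarrow> nat set \<Rightarrow> nat" where
  "thick_weight n c v v' b k d =
     (if d \<in> thick_path_edges n v v' k then b else if d = {v, v'} then 0 else edge_weight c d)"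

lemma num_spanning_trees_eq_tree_sum:
  "num_spanning_trees N c = tree_sum {0..<N} (edge_weight c)"
proof -
  have "edges_on N = edges_in {0..<N}"
    by (auto simp: edges_on_def edges_in_def)
  then have "{T. is_spanning_tree N T} = spanning_trees {0..<N}"
    by (auto simp: is_spanning_tree_def spanning_trees_def connects_def adjacency_def)
  then show ?thesis
    by (simp add: num_spanning_trees_def tree_sum_def edge_weight_def)
qed

lemma thicken_eq_thick_weight:
  assumes "d \<in> edges_in V"
  shows "thicken n c v v' e s (Min d) (Max d) = thick_weight n c v v' (e * s) s d"
proof -
  obtain a b :: nat where "d = {a, b}"
    using assms by (auto simp: edges_in_def)
  then have "{Min d, Max d} = d"
    by (auto simp: min_def max_def)
  then show ?thesis
    by (simp add: thicken_def thick_weight_def thick_path_edges_def edge_weight_def image_iff)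
qed

lemma edge_weight_outside:
  "multigraph n c \<Longrightarrow> n \<le> a \<Longrightarrow> edge_weight c {a, b} = 0"
  by (simp add: edge_weight_def multigraph_def max_def)

lemma thick_path_edges_one: "thick_path_edges n v v' (Suc 0) = {{v', v}}"
  by (simp add: thick_path_edges_def thick_vertex_def)

lemma thick_vertex_less:
  "v < n \<Longrightarrow> v' < n \<Longrightarrow> j \<le> Suc m \<Longrightarrow> thick_vertex n v v' (Suc m) j < n + m"
  by (auto simp: thick_vertex_def)

lemma thick_path_edges_less:
  "v < n \<Longrightarrow> v' < n \<Longrightarrow> d \<in> thick_path_edges n v v' (Suc m) \<Longrightarrow> d \<subseteq> {0..<n + m}"
  using thick_vertex_less[of v n v'] by (fastforce simp: thick_path_edges_def)

lemma thick_vertex_last: "0 < k \<Longrightarrow> thick_vertex n v v' k k = v"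
  by (simp add: thick_vertex_def)

lemma thick_vertex_Suc: "i \<le> m \<Longrightarrow> thick_vertex n v v' (Suc (Suc m)) i = thick_vertex n v v' (Suc m) i"
  by (simp add: thick_vertex_def)

lemma thick_vertex_inner: "0 < i \<Longrightarrow> i < k \<Longrightarrow> thick_vertex n v v' k i = n + i - 1"
  by (simp add: thick_vertex_def)

lemma thick_vertex_eq_last:
  "v < n \<Longrightarrow> v \<noteq> v' \<Longrightarrow> thick_vertex n v v' k j = v \<longleftrightarrow> j = k \<and> 0 < k"
  by (auto simp: thick_vertex_def)

lemma thick_path_edges_Suc:
  fixes n v v' m :: nat
  assumes "v < n" and "v \<noteq> v'"
  defines "u \<equiv> thick_vertex n v v' (Suc m) m"
  shows "thick_path_edges n v v' (Suc (Suc m))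
    = insert {n + m, v} (insert {u, n + m} (thick_path_edges n v v' (Suc m) - {{u, v}}))"
proof -
  define P where "P = (\<lambda>i. {thick_vertex n v v' (Suc m) (i - 1), thick_vertex n v v' (Suc m) i}) ` {1..m}"
  have "(\<lambda>i. {thick_vertex n v v' (Suc (Suc m)) (i - 1), thick_vertex n v v' (Suc (Suc m)) i}) ` {1..m} = P"
    unfolding P_def by (rule image_cong) (auto simp: thick_vertex_def)
  moreover have "{1..Suc m} = insert (Suc m) {1..m}"
    "{1..Suc (Suc m)} = insert (Suc (Suc m)) (insert (Suc m) {1..m})"
    by auto
  ultimately have old: "thick_path_edges n v v' (Suc m) = insert {u, v} P"
    and new: "thick_path_edges n v v' (Suc (Suc m)) = insert {n + m, v} (insert {u, n + m} P)"
    by (simp_all add: thick_path_edges_def P_def u_def thick_vertex_last thick_vertex_inner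
        thick_vertex_Suc)
  have "v \<notin> d" if "d \<in> P" for d
    using that thick_vertex_eq_last[OF assms(1,2)] by (auto simp: P_def eq_commute[of v])
  then have "{u, v} \<notin> P"
    by blast
  then show ?thesis
    unfolding old new by auto
qed

context
  fixes n :: nat and c :: "nat \<Rightarrow> nat \<Rightarrow> nat" and v v' b :: nat
  assumes multigraph: "multigraph n c" and v_less: "v < n" and v'_less: "v' < n"
    and v_ne_v': "v \<noteq> v'"
begin

lemma thick_weight_subdivision:
  "edge_subdivision {0..<n + m} (n + m) (thick_vertex n v v' (Suc m) m) v
    (thick_weight n c v v' b (Suc m)) (thick_weight n c v v' b (Suc (Suc m))) b"
proof
  let ?u = "thick_vertex n v v' (Suc m) m"
  note edges_Suc = thick_path_edges_Suc[OF v_less v_ne_v', of m]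
  show u_in: "?u \<in> {0..<n + m}" and "v \<in> {0..<n + m}" and "n + m \<notin> {0..<n + m}"
    using thick_vertex_less[OF v_less v'_less, of m m] v_less by auto
  show u_ne_v: "?u \<noteq> v"
    using thick_vertex_eq_last[OF v_less v_ne_v'] by simp
  show "finite {0..<n + m}"
    by simp
  show "thick_weight n c v v' b (Suc (Suc m)) {?u, n + m} = b"
    by (simp add: thick_weight_def edges_Suc)
  show "thick_weight n c v v' b (Suc (Suc m)) d = thick_weight n c v v' b (Suc m) d"
    if "d \<in> edges_in {0..<n + m}" and "d \<noteq> {?u, v}" for d
  proof -
    have "n + m \<notin> d"
      using that(1) by (auto simp: edges_in_def)
    then show ?thesis
      using that(2) by (auto simp: thick_weight_def edges_Suc)
  qed
  show "thick_weight n c v v' b (Suc (Suc m)) {?u, v} = 0"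
  proof (cases "?u = v'")
    case False
    then have "n \<le> ?u"
      by (auto simp: thick_vertex_def split: if_splits)
    then show ?thesis
      using u_in u_ne_v v_less
      by (auto simp: thick_weight_def edges_Suc doubleton_eq_iff edge_weight_outside[OF multigraph])
  qed (use v_less v'_less in \<open>auto simp: thick_weight_def edges_Suc doubleton_eq_iff\<close>)
  show "thick_weight n c v v' b (Suc (Suc m)) {n + m, y} = 0" if "y \<noteq> ?u" and "y \<noteq> v" for y
  proof -
    have "{n + m, y} \<notin> thick_path_edges n v v' (Suc m)"
      using thick_path_edges_less[OF v_less v'_less, of "{n + m, y}" m] by auto
    then show ?thesis
      using that v_less v'_less
      by (auto simp: thick_weight_def edges_Suc doubleton_eq_iff edge_weight_outside[OF multigraph])
  qed
qed

lemma tree_sum_avoiding_through_thick_weight: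
  "tree_sum_avoiding {0..<n + m} (thick_weight n c v v' b (Suc m)) {thick_vertex n v v' (Suc m) m, v}
     = b ^ m * tree_sum_avoiding {0..<n} (edge_weight c) {v', v}
   \<and> tree_sum_through {0..<n + m} (thick_weight n c v v' b (Suc m)) {thick_vertex n v v' (Suc m) m, v}
     = b ^ m * tree_sum_through {0..<n} (edge_weight c) {v', v}
       + m * b ^ (m - 1) * tree_sum_avoiding {0..<n} (edge_weight c) {v', v}"
proof (induction m)
  case 0
  have "thick_weight n c v v' b (Suc 0) d = edge_weight c d" if "d \<noteq> {v', v}" for d
    using that by (simp add: thick_weight_def thick_path_edges_one insert_commute)
  then show ?case
    using tree_sum_avoiding_cong[of "{0..<n}" "{v', v}" "thick_weight n c v v' b (Suc 0)" "edge_weight c"]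
      tree_sum_through_cong[of "{0..<n}" "{v', v}" "thick_weight n c v v' b (Suc 0)" "edge_weight c"]
    by (simp add: thick_vertex_def)
next
  case (Suc m)
  interpret edge_subdivision "{0..<n + m}" "n + m" "thick_vertex n v v' (Suc m) m" v
    "thick_weight n c v v' b (Suc m)" "thick_weight n c v v' b (Suc (Suc m))" b
    by (rule thick_weight_subdivision)
  have "insert (n + m) {0..<n + m} = {0..<n + Suc m}"
    by auto
  moreover have "thick_vertex n v v' (Suc (Suc m)) (Suc m) = n + m"
    by (simp add: thick_vertex_def)
  ultimately show ?case
    using tree_sum_avoiding_subdivision tree_sum_through_subdivision Suc.IH
    by (cases m) (simp_all add: algebra_simps)
qed

lemma tree_sum_thick_weight:
  "tree_sum {0..<n + m} (thick_weight n c v v' b (Suc m))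
     = Suc m * b ^ m * tree_sum_avoiding {0..<n} (edge_weight c) {v', v}
       + b ^ Suc m * tree_sum_through {0..<n} (edge_weight c) {v', v}"
    (is "_ = _ * ?A + _ * ?B")
proof -
  let ?W = "thick_weight n c v v' b (Suc m)" and ?last = "{thick_vertex n v v' (Suc m) m, v}"
  have "?last \<in> thick_path_edges n v v' (Suc m)"
    unfolding thick_path_edges_def by (rule image_eqI[of _ _ "Suc m"]) (simp_all add: thick_vertex_last)
  then have "?W ?last = b"
    by (simp add: thick_weight_def)
  then have "tree_sum {0..<n + m} ?W
      = tree_sum_avoiding {0..<n + m} ?W ?last + b * tree_sum_through {0..<n + m} ?W ?last"
    using tree_sum_split[of "{0..<n + m}" ?W ?last] by simp
  also have "\<dots> = b ^ m * ?A + b * (b ^ m * ?B + m * b ^ (m - 1) * ?A)"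
    using tree_sum_avoiding_through_thick_weight[of m] by simp
  also have "\<dots> = Suc m * b ^ m * ?A + b ^ Suc m * ?B"
    by (cases m) (simp_all add: algebra_simps)
  finally show ?thesis .
qed

end

theorem num_spanning_trees_thicken:
  assumes "multigraph n c" and "v < n" and "v' < n" and "v \<noteq> v'" and "c v v' = e" and "0 < s"
  shows "num_spanning_trees (n + s - 1) (thicken n c v v' e s)
    = s * (e * s) ^ (s - 1) * num_spanning_trees n c"
proof -
  obtain m where s: "s = Suc m"
    using assms(6) by (cases s) auto
  let ?A = "tree_sum_avoiding {0..<n} (edge_weight c) {v', v}"
  let ?B = "tree_sum_through {0..<n} (edge_weight c) {v', v}"
  have "edge_weight c {v', v} = e"
    using assms(1,5) by (simp add: edge_weight_def multigraph_def min_def max_def)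
  then have old: "num_spanning_trees n c = ?A + e * ?B"
    using tree_sum_split[of "{0..<n}" "edge_weight c" "{v', v}"] by (simp add: num_spanning_trees_eq_tree_sum)
  have "num_spanning_trees (n + s - 1) (thicken n c v v' e s)
      = tree_sum {0..<n + m} (thick_weight n c v v' (e * s) (Suc m))"
    unfolding num_spanning_trees_eq_tree_sum s
    by (auto intro: tree_sum_cong simp: edge_weight_def thicken_eq_thick_weight)
  also have "\<dots> = s * (e * s) ^ m * ?A + (e * s) ^ s * ?B"
    using tree_sum_thick_weight[OF assms(1-4)] s by simp
  also have "\<dots> = s * (e * s) ^ (s - 1) * num_spanning_trees n c"
    by (simp add: old s algebra_simps)
  finally show ?thesis .
qed

theorem mainTheorem5:
  fixes n :: nat and c :: "nat \<Rightarrow> nat \<Rightarrow> nat" and p q v v' e :: nat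
    and h :: int and S :: "nat \<Rightarrow> int"
  assumes "multigraph n c" and "connected_mg n c"
    and "pair_of_order n c p q h" and "is_marking n c p q h S"
    and "v < n" and "v' < n" and "c v v' = e" and "1 \<le> e"
    and "S v' = 0" and "S v > 0"
  shows "num_spanning_trees (n + nat (S v) - 1) (thicken n c v v' e (nat (S v)))
         = nat (S v) * (e * nat (S v)) ^ (nat (S v) - 1) * num_spanning_trees n c"
proof -
  have "v \<noteq> v'"
    using assms(1,7,8) by (auto simp: multigraph_def)
  then show ?thesis
    using num_spanning_trees_thicken[OF assms(1,5,6) _ assms(7)] assms(10) by simp
qed

end
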